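(* Let $n,k$ be positive integers with $n>2k$, and let $\sigma\in S_n$ be a permutation all of whose cycles have length exceeding $k$. Then the subgroups $S_{n-k}$ and $\langle\sigma\rangle$ invariably generate $S_n$.
   Context: $S_{n-k}$ is viewed as the subgroup of $S_n$ of permutations of $\{1,\dots,n-k\}$ fixing each element of $\{n-k+1,\dots,n\}$. Subgroups $\{H_i\}_{i\in I}$ of a group $H$ invariably generate $H$ if for every choice of elements $\{\sigma_i\}_{i\in I}$ of $H$, the conjugates $\{\sigma_i^{-1}H_i\sigma_i\}_{i\in I}$ generate $H$. *)

theory Defs
  imports "HOL-Algebra.Sym_Groups" "HOL-Combinatorics.Orbits"
begin

definition invariably_generate :: "('a, 'b) monoid_scheme \<Rightarrow> 'i set \<Rightarrow> ('i \<Rightarrow> 'a set) \<Rightarrow> bool" where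
  "invariably_generate G I H \<longleftrightarrow>
     (\<forall>g \<in> Pi I (\<lambda>_. carrier G).
        generate G (\<Union>i\<in>I. (\<lambda>h. inv\<^bsub>G\<^esub> (g i) \<otimes>\<^bsub>G\<^esub> h \<otimes>\<^bsub>G\<^esub> g i) ` H i) = carrier G)"

end

theory Submission
  imports Defs
begin

(* Let H be generated by the conjugates g\<^sub>1\<^sup>-\<^sup>1 S(n-k) g\<^sub>1 and g\<^sub>2\<^sup>-\<^sup>1 <\<sigma>> g\<^sub>2. Then H contains
   every transposition of A = g\<^sub>1\<^sup>-\<^sup>1 {1..n-k}, a set of n - k > n/2 points. Every cycle of \<sigma>
   has more than k points, so it meets the (n-k)-set g\<^sub>2 A; hence some element of H maps
   any given point x into A. Conjugating the transpositions of A back by that element shows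
   that x is joined by transpositions in H to at least n - k points. Two such sets of partners
   intersect, so H contains all transpositions and therefore is all of S(n). *)

lemma inv_comp_transpose_comp:
  assumes "bij f"
  shows "inv' f \<circ> transpose a b \<circ> f = transpose (inv' f a) (inv' f b)"
proof -
  have "inv' f \<circ> transpose a b \<circ> f = inv' f \<circ> (f \<circ> transpose (inv' f a) (inv' f b))"
    using transpose_comp_eq[OF assms] by (simp add: comp_assoc)
  also have "\<dots> = transpose (inv' f a) (inv' f b)"
    using assms by (simp add: comp_assoc[symmetric] bij_is_inj)
  finally show ?thesis .
qed

lemma permutes_exists_funpow_in:
  assumes "\<sigma> permutes S" "finite S" "y \<in> S" "C \<subseteq> S"
    and "card S < card C + card (orbit \<sigma> y)"
  obtains m where "(\<sigma> ^^ m) y \<in> C"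
proof -
  have "orbit \<sigma> y \<inter> C \<noteq> {}"
  proof
    assume "orbit \<sigma> y \<inter> C = {}"
    then have "orbit \<sigma> y \<subseteq> S - C"
      using permutes_orbit_subset[OF assms(1,3)] by blast
    then have "card (orbit \<sigma> y) \<le> card S - card C"
      using card_mono[of "S - C"] card_Diff_subset[of C S] finite_subset assms(2,4) by fastforce
    with assms(5) card_mono[OF assms(2,4)] show False by linarith
  qed
  moreover have "permutation \<sigma>"
    using assms(1,2) permutation_permutes by blast
  ultimately show ?thesis
    using that unfolding orbit_altdef_permutation[OF \<open>permutation \<sigma>\<close>] by blast
qed

lemma sym_group_carrier_mono:
  assumes "m \<le> n"
  shows "carrier (sym_group m) \<subseteq> carrier (sym_group n)"
  using assms permutes_subset[of _ "{1..m}" "{1..n}"] by (auto simp: sym_group_carrier)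

lemma conj_sym_group_closed:
  assumes "g permutes {1..n}" "h \<in> carrier (sym_group n)"
  shows "inv' g \<circ> h \<circ> g \<in> carrier (sym_group n)"
  using assms by (simp add: sym_group_carrier permutes_compose permutes_inv)

lemma transpose_in_conj_sym_group:
  assumes "bij g" "a \<in> inv' g ` {1..m}" "b \<in> inv' g ` {1..m}"
  shows "transpose a b \<in> (\<lambda>h. inv' g \<circ> h \<circ> g) ` carrier (sym_group m)"
proof -
  obtain i j where ij: "i \<in> {1..m}" "j \<in> {1..m}" "a = inv' g i" "b = inv' g j"
    using assms(2,3) by blast
  then have "transpose i j \<in> carrier (sym_group m)"
    by (simp add: sym_group_carrier permutes_swap_id)
  moreover have "transpose a b = inv' g \<circ> transpose i j \<circ> g"
    using inv_comp_transpose_comp[OF assms(1)] ij by simp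
  ultimately show ?thesis by blast
qed

lemma subgroup_sym_group_funpow_closed:
  assumes "subgroup H (sym_group n)" "p \<in> H"
  shows "p ^^ m \<in> H"
proof (induction m)
  case 0
  show ?case using subgroup.one_closed[OF assms(1)] by (simp add: sym_group_one id_def)
next
  case (Suc m)
  then show ?case
    using subgroup.m_closed[OF assms(1) assms(2) Suc] by (simp add: sym_group_mult del: comp_apply)
qed

lemma subgroup_sym_group_transpose_trans:
  assumes "subgroup H (sym_group n)"
    and "transpose x z \<in> H" "transpose z y \<in> H"
  shows "transpose x y \<in> H"
proof (cases "x = y \<or> z = y")
  case True
  then show ?thesis
    using assms(2) subgroup.one_closed[OF assms(1)] by (auto simp: sym_group_one)
next
  case False
  then have "transpose x z \<circ> transpose z y \<circ> transpose x z = transpose x y"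
    by (intro transpose_comp_triple) auto
  then show ?thesis
    using subgroup.m_closed[OF assms(1)] assms(2,3) by (metis sym_group_mult)
qed

lemma subgroup_sym_group_eq_carrier_transpositionsI:
  assumes "subgroup H (sym_group n)"
    and "\<And>x y. x \<in> {1..n} \<Longrightarrow> y \<in> {1..n} \<Longrightarrow> transpose x y \<in> H"
  shows "H = carrier (sym_group n)"
proof
  show "H \<subseteq> carrier (sym_group n)"
    using subgroup.subset[OF assms(1)] .
  show "carrier (sym_group n) \<subseteq> H"
  proof
    fix p assume "p \<in> carrier (sym_group n)"
    then have "p permutes {1..n}" by (simp add: sym_group_carrier)
    from this finite_atLeastAtMost[of 1 n] show "p \<in> H"
    proof (induction rule: permutes_induct)
      case id
      show ?case using subgroup.one_closed[OF assms(1)] by (simp add: sym_group_one id_def)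
    next
      case (swap a b p)
      then show ?case
        using subgroup.m_closed[OF assms(1)] assms(2) by (metis sym_group_mult)
    qed
  qed
qed

lemma card_transposition_partners_ge:
  assumes H: "subgroup H (sym_group n)"
    and A: "A \<subseteq> {1..n}" "\<And>a b. a \<in> A \<Longrightarrow> b \<in> A \<Longrightarrow> transpose a b \<in> H"
    and h: "h \<in> H" "h x \<in> A"
  shows "card A \<le> card {y \<in> {1..n}. transpose x y \<in> H}"
proof -
  have h_perm: "h permutes {1..n}"
    using subgroup.subset[OF H] h(1) by (auto simp: sym_group_carrier)
  have "inv' h ` A \<subseteq> {y \<in> {1..n}. transpose x y \<in> H}"
  proof
    fix y assume "y \<in> inv' h ` A"
    then obtain a where a: "a \<in> A" "y = inv' h a" by blast
    have "inv' h \<circ> transpose (h x) a \<circ> h \<in> H"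
      using subgroup.m_closed[OF H] subgroup.m_inv_closed[OF H] subgroup.subset[OF H]
        h A(2)[OF h(2) a(1)] by (fastforce simp: sym_group_mult)
    moreover have "inv' h \<circ> transpose (h x) a \<circ> h = transpose x y"
      using inv_comp_transpose_comp[OF permutes_bij[OF h_perm]] permutes_inverses(2)[OF h_perm] a(2)
      by simp
    moreover have "y \<in> {1..n}"
      using a A(1) permutes_in_image[OF permutes_inv[OF h_perm]] by auto
    ultimately show "y \<in> {y \<in> {1..n}. transpose x y \<in> H}" by simp
  qed
  moreover have "inj_on (inv' h) A"
    using permutes_inj[OF permutes_inv[OF h_perm]] by (rule inj_on_subset) simp
  ultimately show ?thesis
    using card_inj_on_le[of "inv' h" A] by simp
qed

lemma subgroup_sym_group_eq_carrierI:
  assumes H: "subgroup H (sym_group n)"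
    and A: "A \<subseteq> {1..n}" "n < 2 * card A"
    and transp: "\<And>a b. a \<in> A \<Longrightarrow> b \<in> A \<Longrightarrow> transpose a b \<in> H"
    and move: "\<And>x. x \<in> {1..n} \<Longrightarrow> \<exists>h\<in>H. h x \<in> A"
  shows "H = carrier (sym_group n)"
proof (rule subgroup_sym_group_eq_carrier_transpositionsI[OF H])
  define partners where "partners x = {y \<in> {1..n}. transpose x y \<in> H}" for x
  have many_partners: "card A \<le> card (partners x)" if "x \<in> {1..n}" for x
    using move[OF that] card_transposition_partners_ge[OF H A(1) transp]
    unfolding partners_def by blast
  fix x y assume xy: "x \<in> {1..n}" "y \<in> {1..n}"
  have "partners x \<inter> partners y \<noteq> {}"
  proof
    assume "partners x \<inter> partners y = {}"
    then have "card (partners x) + card (partners y) = card (partners x \<union> partners y)"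
      by (intro card_Un_disjoint[symmetric]) (auto simp: partners_def)
    also have "\<dots> \<le> card {1..n}"
      by (intro card_mono) (auto simp: partners_def)
    also have "\<dots> = n" by simp
    finally show False
      using many_partners[OF xy(1)] many_partners[OF xy(2)] A(2) by linarith
  qed
  then obtain z where "transpose x z \<in> H" "transpose y z \<in> H"
    unfolding partners_def by blast
  then show "transpose x y \<in> H"
    using subgroup_sym_group_transpose_trans[OF H] by (metis transpose_commute)
qed

lemma generate_sym_group_eq_carrierI:
  assumes "U \<subseteq> carrier (sym_group n)"
    and "A \<subseteq> {1..n}" "n < 2 * card A"
    and "\<And>a b. a \<in> A \<Longrightarrow> b \<in> A \<Longrightarrow> transpose a b \<in> U"
    and "\<And>x. x \<in> {1..n} \<Longrightarrow> \<exists>h\<in>U. h x \<in> A"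
  shows "generate (sym_group n) U = carrier (sym_group n)"
proof -
  interpret group "sym_group n" by (rule sym_group_is_group)
  have "U \<subseteq> generate (sym_group n) U"
    by (blast intro: generate.incl)
  with assms show ?thesis
    by (intro subgroup_sym_group_eq_carrierI[OF generate_is_subgroup[OF assms(1)]]) blast+
qed

lemma conj_cyclic_subgroup_moves_into:
  assumes "\<sigma> \<in> carrier (sym_group n)" "g permutes {1..n}"
    and "x \<in> {1..n}" "A \<subseteq> {1..n}" "n < card A + card (orbit \<sigma> (g x))"
  shows "\<exists>h\<in>(\<lambda>h. inv' g \<circ> h \<circ> g) ` generate (sym_group n) {\<sigma>}. h x \<in> A"
proof -
  interpret group "sym_group n" by (rule sym_group_is_group)
  have gA: "g ` A \<subseteq> {1..n}" "card (g ` A) = card A"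
    using assms(4) permutes_image[OF assms(2)] card_image[OF permutes_inj_on[OF assms(2)]] by auto
  have gx: "g x \<in> {1..n}"
    using assms(3) permutes_in_image[OF assms(2)] by simp
  have "\<sigma> permutes {1..n}"
    using assms(1) by (simp add: sym_group_carrier)
  then obtain m where m: "(\<sigma> ^^ m) (g x) \<in> g ` A"
    using permutes_exists_funpow_in[OF _ finite_atLeastAtMost gx gA(1)] gA(2) assms(5) by auto
  have "\<sigma> ^^ m \<in> generate (sym_group n) {\<sigma>}"
    using assms(1)
    by (intro subgroup_sym_group_funpow_closed[where n = n] generate_is_subgroup generate.incl) auto
  moreover have "(inv' g \<circ> \<sigma> ^^ m \<circ> g) x \<in> A"
    using m permutes_inverses(2)[OF assms(2)] by auto
  ultimately show ?thesis by blast
qed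

lemma invariably_generate_sym_group_pairI:
  assumes "\<And>g\<^sub>1 g\<^sub>2. g\<^sub>1 permutes {1..n} \<Longrightarrow> g\<^sub>2 permutes {1..n} \<Longrightarrow>
      generate (sym_group n) ((\<lambda>h. inv' g\<^sub>1 \<circ> h \<circ> g\<^sub>1) ` K \<union> (\<lambda>h. inv' g\<^sub>2 \<circ> h \<circ> g\<^sub>2) ` L)
        = carrier (sym_group n)"
  shows "invariably_generate (sym_group n) UNIV (\<lambda>b. if b then K else L)"
  unfolding invariably_generate_def
proof
  fix g :: "bool \<Rightarrow> nat \<Rightarrow> nat" assume "g \<in> UNIV \<rightarrow> carrier (sym_group n)"
  then show "generate (sym_group n) (\<Union>i\<in>UNIV. (\<lambda>h. inv\<^bsub>sym_group n\<^esub> (g i) \<otimes>\<^bsub>sym_group n\<^esub> h \<otimes>\<^bsub>sym_group n\<^esub> g i)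
      ` (if i then K else L)) = carrier (sym_group n)"
    using assms[of "g True" "g False"] by (simp add: UNIV_bool Un_commute sym_group_carrier sym_group_mult)
qed

theorem proposition3p5:
  fixes n k :: nat and \<sigma> :: "nat \<Rightarrow> nat"
  assumes "0 < k" and "0 < n" and "n > 2 * k"
    and "\<sigma> \<in> carrier (sym_group n)"
    and "\<forall>x\<in>{1..n}. card (orbit \<sigma> x) > k"
  shows "invariably_generate (sym_group n) (UNIV :: bool set)
           (\<lambda>b. if b then carrier (sym_group (n - k)) else generate (sym_group n) {\<sigma>})"
proof (rule invariably_generate_sym_group_pairI)
  fix g\<^sub>1 g\<^sub>2 assume g: "g\<^sub>1 permutes {1..n}" "g\<^sub>2 permutes {1..n}"
  interpret group "sym_group n" by (rule sym_group_is_group)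
  let ?A = "inv' g\<^sub>1 ` {1..n - k}"
  have "{1..n - k} \<subseteq> {1..n}" by auto
  then have A_sub: "?A \<subseteq> {1..n}"
    using image_mono permutes_image[OF permutes_inv[OF g(1)]] by metis
  have card_A: "card ?A = n - k"
    using card_image[OF permutes_inj_on[OF permutes_inv[OF g(1)]]] by simp
  show "generate (sym_group n) ((\<lambda>h. inv' g\<^sub>1 \<circ> h \<circ> g\<^sub>1) ` carrier (sym_group (n - k))
      \<union> (\<lambda>h. inv' g\<^sub>2 \<circ> h \<circ> g\<^sub>2) ` generate (sym_group n) {\<sigma>}) = carrier (sym_group n)"
    (is "generate _ ?U = _")
  proof (rule generate_sym_group_eq_carrierI[OF _ A_sub])
    show "?U \<subseteq> carrier (sym_group n)"
      using sym_group_carrier_mono[of "n - k" n] generate_in_carrier[of "{\<sigma>}"] assms(4)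
        conj_sym_group_closed g by auto
    show "n < 2 * card ?A"
      using card_A assms(3) by linarith
    show "transpose a b \<in> ?U" if "a \<in> ?A" "b \<in> ?A" for a b
      using transpose_in_conj_sym_group[OF permutes_bij[OF g(1)] that] by blast
  next
    fix x assume x: "x \<in> {1..n}"
    have "n < card ?A + card (orbit \<sigma> (g\<^sub>2 x))"
      using card_A bspec[OF assms(5) permutes_in_image[OF g(2), THEN iffD2, OF x]] assms(3) by simp
    then show "\<exists>h\<in>?U. h x \<in> ?A"
      using conj_cyclic_subgroup_moves_into[OF assms(4) g(2) x A_sub] by blast
  qed
qed

end
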